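(* For every integer $n\ge0$, the following polynomial identities hold: (1) $\displaystyle \mathrm B_{n+1}(x,y)=\sum_{k=0}^n\binom nk\mathrm B_k(x)\,y^{n-k}=\sum_{k=0}^n\binom nk\mathrm{Fe}_k(x)(y+1)^{n-k}$; (2) $\displaystyle \mathrm C_{n+1}(x,y)=\sum_{k=0}^n\binom nk\mathrm{Mo}_k(x)\,y^{n-k}=\sum_{k=0}^{\lfloor n/2\rfloor}\mathcal C_k\binom n{2k}x^k(y+1)^{n-2k}$, where $\mathcal C_k=\frac1{k+1}\binom{2k}k$.
   Context: A set partition of $[n]=\{1,\dots,n\}$ is a set of nonempty pairwise disjoint sets (blocks) with union $[n]$ ($[0]=\emptyset$ has exactly one partition, the empty one). A pair $(i,j)$ is an arc of $\Lambda$ if $i<j$ lie in the same block and $j$ is the least element of that block greater than $i$; $\mathrm{Arc}(\Lambda)$ is the set of arcs and $\mathrm{Cov}(\Lambda)=\{(i,j)\in\mathrm{Arc}(\Lambda):j=i+1\}$. $\Lambda$ is noncrossing if there are no arcs $(i,k),(j,l)$ with $i<j<k<l$; feasible if every block has at least two elements; poor if every block has at most two elements. $\Pi(n)$ and $\mathrm{NC}(n)$ are the sets of partitions and noncrossing partitions of $[n]$. Define $\mathrm B_n(x,y)=\sum_{\Lambda\in\Pi(n)}x^{|\mathrm{Arc}(\Lambda)\setminus\mathrm{Cov}(\Lambda)|}y^{|\mathrm{Cov}(\Lambda)|}$, $\mathrm C_n(x,y)$ the same sum over $\mathrm{NC}(n)$, $\mathrm B_n(x)=\mathrm B_n(x,x)$,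 $\mathrm{Fe}_n(x)=\sum_{\text{feasible }\Lambda\in\Pi(n)}x^{|\mathrm{Arc}(\Lambda)|}$ and $\mathrm{Mo}_n(x)=\sum_{\text{poor }\Lambda\in\mathrm{NC}(n)}x^{|\mathrm{Arc}(\Lambda)|}$. *)

theory Defs
  imports Main "HOL-Library.Disjoint_Sets"
begin

definition set_partitions :: "nat \<Rightarrow> nat set set set" where
  "set_partitions n = {P. partition_on {1..n} P}"

definition Arc :: "nat set set \<Rightarrow> (nat \<times> nat) set" where
  "Arc P = {(i, j). i < j \<and> (\<exists>B\<in>P. i \<in> B \<and> j \<in> B \<and> (\<forall>k\<in>B. i < k \<longrightarrow> j \<le> k))}"

definition Cov :: "nat set set \<Rightarrow> (nat \<times> nat) set" where
  "Cov P = {(i, j) \<in> Arc P. j = i + 1}"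

definition noncrossing :: "nat set set \<Rightarrow> bool" where
  "noncrossing P \<longleftrightarrow> \<not> (\<exists>i j k l. i < j \<and> j < k \<and> k < l \<and> (i, k) \<in> Arc P \<and> (j, l) \<in> Arc P)"

definition feasible :: "nat set set \<Rightarrow> bool" where
  "feasible P \<longleftrightarrow> (\<forall>B\<in>P. card B \<ge> 2)"

definition poor :: "nat set set \<Rightarrow> bool" where
  "poor P \<longleftrightarrow> (\<forall>B\<in>P. card B \<le> 2)"

definition NC :: "nat \<Rightarrow> nat set set set" where
  "NC n = {P \<in> set_partitions n. noncrossing P}"

text \<open>Polynomials are represented by their evaluation at arbitrary elements of a commutative ring.\<close>
definition Bxy :: "nat \<Rightarrow> 'a::comm_ring_1 \<Rightarrow> 'a \<Rightarrow> 'a" where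
  "Bxy n x y = (\<Sum>P\<in>set_partitions n. x ^ card (Arc P - Cov P) * y ^ card (Cov P))"

definition Cxy :: "nat \<Rightarrow> 'a::comm_ring_1 \<Rightarrow> 'a \<Rightarrow> 'a" where
  "Cxy n x y = (\<Sum>P\<in>NC n. x ^ card (Arc P - Cov P) * y ^ card (Cov P))"

definition Bx :: "nat \<Rightarrow> 'a::comm_ring_1 \<Rightarrow> 'a" where
  "Bx n x = Bxy n x x"

definition Fe :: "nat \<Rightarrow> 'a::comm_ring_1 \<Rightarrow> 'a" where
  "Fe n x = (\<Sum>P\<in>{P \<in> set_partitions n. feasible P}. x ^ card (Arc P))"

definition Mo :: "nat \<Rightarrow> 'a::comm_ring_1 \<Rightarrow> 'a" where
  "Mo n x = (\<Sum>P\<in>{P \<in> NC n. poor P}. x ^ card (Arc P))"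

definition catalan :: "nat \<Rightarrow> nat" where
  "catalan k = ((2 * k) choose k) div (k + 1)"

end

theory Submission
  imports Defs
begin

text \<open>
  All four identities come from deleting the largest element \<open>n + 1\<close> of a partition of
  \<open>[n + 1]\<close>: it was either a singleton block, or it was appended to a block \<open>B\<close> of the remaining
  partition of \<open>[n]\<close>, creating the single new arc \<open>(max B, n + 1)\<close>, which is a cover exactly when
  \<open>max B = n\<close>. Hence, among the blocks that can receive \<open>n + 1\<close>, the one ending at \<open>n\<close> contributes
  \<open>y\<close> and every other one contributes \<open>x\<close>. Refining the generating functions by the number of
  such blocks (all blocks in general, the visible ones -- those whose maximum lies under no arc --
  in the noncrossing case) makes the recursion close, and iterating it produces the binomial
  expansion in \<open>y\<close>; on the noncrossing side, appending to the visible block of rank \<open>r\<close> leaves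
  \<open>r + 1\<close> visible blocks, which matches the recursion of poor noncrossing partitions refined by
  their visible singletons. The feasible form follows by inclusion-exclusion over singleton
  blocks, and the Catalan form from \<open>Mo\<^sub>k(x) = \<Sum>\<^sub>j C(k,2j) Cat\<^sub>j x\<^sup>j\<close>, which comes out of the
  ballot-number recurrence satisfied by poor noncrossing partitions with marked visible singletons.
\<close>

section \<open>Binomial sums\<close>

lemma sum_choose_pascal:
  fixes y :: "'a::comm_ring_1"
  shows "(\<Sum>j\<le>n. of_nat (n choose j) * y ^ (n - j) * (A (Suc j) + y * A j)) =
         (\<Sum>j\<le>Suc n. of_nat (Suc n choose j) * y ^ (Suc n - j) * A j)"
proof -
  have shifted: "(\<Sum>j\<le>n. of_nat (n choose j) * y ^ (n - j) * (y * A j)) =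
      y ^ Suc n * A 0 + (\<Sum>j\<le>n. of_nat (n choose Suc j) * y ^ (n - j) * A (Suc j))"
  proof -
    have "(\<Sum>j\<le>n. of_nat (n choose j) * y ^ (n - j) * (y * A j)) =
        (\<Sum>j\<le>n. of_nat (n choose j) * y ^ (Suc n - j) * A j)"
      by (intro sum.cong refl) (simp add: Suc_diff_le mult_ac)
    also have "\<dots> = (\<Sum>j\<le>Suc n. of_nat (n choose j) * y ^ (Suc n - j) * A j)"
      by (simp add: binomial_eq_0)
    also have "\<dots> = y ^ Suc n * A 0 + (\<Sum>j\<le>n. of_nat (n choose Suc j) * y ^ (n - j) * A (Suc j))"
      by (subst sum.atMost_Suc_shift) simp
    finally show ?thesis .
  qed
  have "(\<Sum>j\<le>Suc n. of_nat (Suc n choose j) * y ^ (Suc n - j) * A j) =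
      y ^ Suc n * A 0 + (\<Sum>j\<le>n. (of_nat (n choose j) + of_nat (n choose Suc j)) * y ^ (n - j) * A (Suc j))"
    by (subst sum.atMost_Suc_shift) simp
  then show ?thesis
    by (simp add: shifted distrib_left distrib_right sum.distrib)
qed

lemma choose_absorb_sum:
  assumes "s \<le> q"
  shows "s * (s - 1 choose t) + (q - s) * (s choose t) = (q - t) * (s choose t)"
proof (cases "t \<le> s")
  case True
  have "s * (s - 1 choose t) = (s - t) * (s choose t)"
    using binomial_absorb_comp[of s t] by simp
  then show ?thesis using True assms by (simp add: diff_mult_distrib[symmetric] add_mult_distrib[symmetric])
next
  case False
  then show ?thesis by (cases s) (simp_all add: binomial_eq_0)
qed

lemma choose_Suc_pred: "Suc N choose j = (if j = 0 then 0 else N choose (j - 1)) + (N choose j)"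
  by (cases j) simp_all

lemma alternating_sum_choose_le:
  assumes "s \<le> k"
  shows "(\<Sum>t\<le>k. (- 1) ^ t * of_nat (s choose t)) = (if s = 0 then 1 else 0 :: 'a::comm_ring_1)"
proof -
  have "(\<Sum>t\<le>k. (- 1) ^ t * of_nat (s choose t)) = (\<Sum>t\<le>s. (- 1) ^ t * (of_nat (s choose t) :: 'a))"
    using assms by (intro sum.mono_neutral_right) (auto simp: binomial_eq_0)
  then show ?thesis by (simp add: choose_alternating_sum)
qed

lemma sum_choose_mult_choose:
  fixes u w :: "'a::comm_ring_1"
  assumes "i \<le> n"
  shows "(\<Sum>k=i..n. of_nat (n choose k) * of_nat (k choose i) * u ^ (k - i) * w ^ (n - k)) =
    of_nat (n choose i) * (u + w) ^ (n - i)"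
proof -
  have "(\<Sum>k=i..n. of_nat (n choose k) * of_nat (k choose i) * u ^ (k - i) * w ^ (n - k)) =
      (\<Sum>m=0..n - i. of_nat (n choose (i + m)) * of_nat ((i + m) choose i) * u ^ m * w ^ (n - i - m))"
    using assms by (subst sum.atLeastAtMost_shift_0) (auto simp: add.commute)
  also have "\<dots> = (\<Sum>m=0..n - i. of_nat (n choose i) * (of_nat (n - i choose m) * u ^ m * w ^ (n - i - m)))"
  proof (intro sum.cong refl)
    fix m assume "m \<in> {0..n - i}"
    then have "(n choose (i + m)) * ((i + m) choose i) = (n choose i) * (n - i choose m)"
      using assms choose_mult[of i "i + m" n] by auto
    then have "of_nat (n choose (i + m)) * of_nat ((i + m) choose i) =
        (of_nat (n choose i) * of_nat (n - i choose m) :: 'a)"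
      by (metis of_nat_mult)
    then show "of_nat (n choose (i + m)) * of_nat ((i + m) choose i) * u ^ m * w ^ (n - i - m) =
        of_nat (n choose i) * (of_nat (n - i choose m) * u ^ m * w ^ (n - i - m))"
      by (simp add: mult.assoc)
  qed
  also have "\<dots> = of_nat (n choose i) * (u + w) ^ (n - i)"
    by (simp add: binomial_ring sum_distrib_left atLeast0AtMost)
  finally show ?thesis .
qed

lemma binomial_transform_compose:
  fixes w u :: "'a::comm_ring_1"
  shows "(\<Sum>k\<le>n. of_nat (n choose k) * w ^ (n - k) * (\<Sum>i\<le>k. of_nat (k choose i) * A i * u ^ (k - i))) =
    (\<Sum>i\<le>n. of_nat (n choose i) * A i * (w + u) ^ (n - i))"
proof -
  define F where "F k i = A i * (of_nat (n choose k) * of_nat (k choose i) * u ^ (k - i) * w ^ (n - k))" for k i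
  have "(\<Sum>k\<le>n. of_nat (n choose k) * w ^ (n - k) * (\<Sum>i\<le>k. of_nat (k choose i) * A i * u ^ (k - i))) =
      (\<Sum>k\<le>n. \<Sum>i\<in>{i\<in>{..n}. i \<le> k}. F k i)"
  proof (intro sum.cong refl)
    fix k assume "k \<in> {..n}"
    then have "{i\<in>{..n}. i \<le> k} = {..k}" by auto
    then show "of_nat (n choose k) * w ^ (n - k) * (\<Sum>i\<le>k. of_nat (k choose i) * A i * u ^ (k - i)) =
        (\<Sum>i\<in>{i\<in>{..n}. i \<le> k}. F k i)"
      by (simp add: F_def sum_distrib_left mult_ac)
  qed
  also have "\<dots> = (\<Sum>i\<le>n. \<Sum>k\<in>{k\<in>{..n}. i \<le> k}. F k i)"
    by (rule sum.swap_restrict) auto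
  also have "\<dots> = (\<Sum>i\<le>n. of_nat (n choose i) * A i * (w + u) ^ (n - i))"
  proof (intro sum.cong refl)
    fix i assume "i \<in> {..n}"
    then have "{k\<in>{..n}. i \<le> k} = {i..n}" and "i \<le> n" by auto
    then have "(\<Sum>k\<in>{k\<in>{..n}. i \<le> k}. F k i) =
        A i * (\<Sum>k=i..n. of_nat (n choose k) * of_nat (k choose i) * u ^ (k - i) * w ^ (n - k))"
      by (simp add: F_def sum_distrib_left)
    then show "(\<Sum>k\<in>{k\<in>{..n}. i \<le> k}. F k i) = of_nat (n choose i) * A i * (w + u) ^ (n - i)"
      unfolding sum_choose_mult_choose[OF \<open>i \<le> n\<close>] by (simp add: add.commute mult_ac)
  qed
  finally show ?thesis .
qed

lemma sum_atMost_even: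
  fixes g :: "nat \<Rightarrow> 'a::comm_monoid_add"
  shows "(\<Sum>i\<le>k. if even i then g (i div 2) else 0) = (\<Sum>j\<le>k div 2. g j)"
proof -
  have "(\<Sum>i\<le>k. if even i then g (i div 2) else 0) = (\<Sum>i\<in>{i\<in>{..k}. even i}. g (i div 2))"
    by (rule sum.inter_filter[symmetric]) simp
  also have "{i\<in>{..k}. even i} = (\<lambda>j. 2 * j) ` {..k div 2}"
  proof
    show "{i\<in>{..k}. even i} \<subseteq> (\<lambda>j. 2 * j) ` {..k div 2}"
    proof
      fix i assume "i \<in> {i\<in>{..k}. even i}"
      then obtain j where "i = 2 * j" "2 * j \<le> k" by (auto elim!: evenE)
      then show "i \<in> (\<lambda>j. 2 * j) ` {..k div 2}" by auto
    qed
    show "(\<lambda>j. 2 * j) ` {..k div 2} \<subseteq> {i\<in>{..k}. even i}" by auto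
  qed
  also have "(\<Sum>i\<in>(\<lambda>j. 2 * j) ` {..k div 2}. g (i div 2)) = (\<Sum>j\<le>k div 2. g j)"
    by (subst sum.reindex) (auto simp: inj_on_def)
  finally show ?thesis .
qed

lemma sum_rank_reindex:
  fixes g :: "'b \<Rightarrow> 'c::linorder"
  assumes V: "finite V" and g: "inj_on g V"
  shows "(\<Sum>v\<in>V. h (card {u\<in>V. g u < g v})) = (\<Sum>r<card V. h r)"
proof -
  define rk where "rk v = card {u\<in>V. g u < g v}" for v
  have mono: "rk v < rk v'" if "v \<in> V" "v' \<in> V" "g v < g v'" for v v'
  proof -
    have "{u\<in>V. g u < g v} \<subset> {u\<in>V. g u < g v'}" using that by auto
    then show ?thesis unfolding rk_def by (intro psubset_card_mono) (use V in auto)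
  qed
  have inj: "inj_on rk V"
    by (rule inj_onI) (metis g inj_onD less_irrefl mono neq_iff)
  have "rk ` V \<subseteq> {..<card V}"
    unfolding rk_def using V by (auto intro!: psubset_card_mono)
  then have "rk ` V = {..<card V}"
    by (intro card_subset_eq) (simp_all add: card_image[OF inj])
  then show ?thesis using sum.reindex[OF inj, of h] by (simp add: rk_def)
qed

section \<open>Removing the largest element of a set partition\<close>

lemma partition_on_remove:
  assumes "partition_on A P" "p \<in> P"
  shows "partition_on (A - p) (P - {p})"
proof -
  have "disjnt p (\<Union>(P - {p}))"
    using assms partition_onD2[OF assms(1)] by (auto simp: disjoint_def disjnt_def)
  moreover have "P = insert p (P - {p})" using assms(2) by blast
  ultimately show ?thesis using assms(1) partition_on_insert[of p "P - {p}" A] by metis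
qed

lemma finite_set_partitions: "finite (set_partitions n)"
  unfolding set_partitions_def by (rule finitely_many_partition_on) simp

lemma finite_set_partition: "P \<in> set_partitions n \<Longrightarrow> finite P"
  by (rule finite_elements[of "{1..n}"]) (auto simp: set_partitions_def)

lemma set_partition_block:
  assumes "P \<in> set_partitions n" "B \<in> P"
  shows "B \<subseteq> {1..n}" "B \<noteq> {}" "finite B"
  using assms finite_subset[of B "{1..n}"] by (auto simp: set_partitions_def partition_on_def)

lemma set_partition_block_eq:
  "P \<in> set_partitions n \<Longrightarrow> B \<in> P \<Longrightarrow> C \<in> P \<Longrightarrow> i \<in> B \<Longrightarrow> i \<in> C \<Longrightarrow> B = C"
  unfolding set_partitions_def partition_on_def disjoint_def by blast

lemma set_partition_cover:
  assumes "P \<in> set_partitions n" "i \<in> {1..n}"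
  obtains B where "B \<in> P" "i \<in> B"
  using assms unfolding set_partitions_def partition_on_def by blast

lemma set_partitions_0: "set_partitions 0 = {{}}"
  by (auto simp: set_partitions_def partition_on_empty)

definition add_singleton :: "nat \<Rightarrow> nat set set \<Rightarrow> nat set set" where
  "add_singleton n Q = insert {Suc n} Q"

definition add_to_block :: "nat \<Rightarrow> nat set set \<Rightarrow> nat set \<Rightarrow> nat set set" where
  "add_to_block n Q B = insert (insert (Suc n) B) (Q - {B})"

definition delete_last :: "nat \<Rightarrow> nat set set \<Rightarrow> nat set set" where
  "delete_last n P = (\<inter>) {1..n} ` P - {{}}"

context
  fixes n :: nat and Q :: "nat set set"
  assumes Q: "Q \<in> set_partitions n"
begin

lemma add_singleton_in_set_partitions: "add_singleton n Q \<in> set_partitions (Suc n)"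
proof -
  have "disjnt {Suc n} (\<Union>Q)" and "{1..Suc n} - {Suc n} = {1..n}"
    using Q by (auto simp: set_partitions_def partition_on_def disjnt_def)
  then show ?thesis
    using Q by (simp add: add_singleton_def set_partitions_def partition_on_insert)
qed

lemma add_to_block_in_set_partitions:
  assumes B: "B \<in> Q"
  shows "add_to_block n Q B \<in> set_partitions (Suc n)"
proof -
  have part: "partition_on {1..n} Q" using Q by (simp add: set_partitions_def)
  have "disjnt (insert (Suc n) B) (\<Union>(Q - {B}))"
    using part B set_partition_block(1)[OF Q] set_partition_block_eq[OF Q]
    by (fastforce simp: disjnt_def)
  moreover have "{1..Suc n} - insert (Suc n) B = {1..n} - B" by auto
  ultimately have "partition_on {1..Suc n} (insert (insert (Suc n) B) (Q - {B}))"
    using partition_on_remove[OF part B] set_partition_block(1)[OF Q B] partition_on_insert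
    by (metis atLeastAtMostSuc_conv insert_mono insert_not_empty le_add1 plus_1_eq_Suc)
  then show ?thesis by (simp add: add_to_block_def set_partitions_def)
qed

lemma delete_last_add_singleton: "delete_last n (add_singleton n Q) = Q"
proof -
  have "(\<inter>) {1..n} ` add_singleton n Q = insert {} Q"
    using set_partition_block(1)[OF Q] by (auto simp: add_singleton_def image_iff Int_absorb1)
  then show ?thesis using set_partition_block(2)[OF Q] by (auto simp: delete_last_def)
qed

lemma delete_last_add_to_block:
  assumes B: "B \<in> Q"
  shows "delete_last n (add_to_block n Q B) = Q"
proof -
  have "(\<inter>) {1..n} ` add_to_block n Q B = insert B (Q - {B})"
    using set_partition_block(1)[OF Q] B
    by (auto simp: add_to_block_def image_iff Int_absorb1 intro!: exI[of _ B])
  then show ?thesis using set_partition_block(2)[OF Q] B by (auto simp: delete_last_def)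
qed

lemma block_with_last_add_to_block:
  assumes B: "B \<in> Q" and C: "C \<in> add_to_block n Q B" "Suc n \<in> C"
  shows "C = insert (Suc n) B"
  using C set_partition_block(1)[OF Q] by (fastforce simp: add_to_block_def)

lemma inj_on_add_to_block: "inj_on (add_to_block n Q) Q"
proof (rule inj_onI)
  fix B B' assume B: "B \<in> Q" and B': "B' \<in> Q" and eq: "add_to_block n Q B = add_to_block n Q B'"
  have "insert (Suc n) B \<in> add_to_block n Q B'"
    unfolding eq[symmetric] by (simp add: add_to_block_def)
  then have "insert (Suc n) B = insert (Suc n) B'"
    by (rule block_with_last_add_to_block[OF B']) simp
  moreover have "Suc n \<notin> B" "Suc n \<notin> B'"
    using set_partition_block(1)[OF Q] B B' by fastforce+
  ultimately show "B = B'" by (metis insert_ident)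
qed

lemma add_singleton_notin_add_to_block: "add_singleton n Q \<notin> add_to_block n Q ` Q"
proof
  assume "add_singleton n Q \<in> add_to_block n Q ` Q"
  then obtain B where B: "B \<in> Q" and eq: "add_singleton n Q = add_to_block n Q B" by blast
  have "{Suc n} \<in> add_to_block n Q B"
    unfolding eq[symmetric] by (simp add: add_singleton_def)
  then have "{Suc n} = insert (Suc n) B"
    by (rule block_with_last_add_to_block[OF B]) simp
  then show False using set_partition_block(1,2)[OF Q B] by fastforce
qed

end

lemma delete_last_in_set_partitions:
  assumes "P \<in> set_partitions (Suc n)"
  shows "delete_last n P \<in> set_partitions n"
proof -
  have "partition_on ({1..n} \<inter> {1..Suc n}) ((\<inter>) {1..n} ` P - {{}})"
    using assms partition_on_restrict[of "{1..Suc n}" P "{1..n}"] by (simp add: set_partitions_def)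
  then show ?thesis by (simp add: set_partitions_def delete_last_def Int_absorb2)
qed

lemma delete_last_eq:
  assumes P: "P \<in> set_partitions (Suc n)" and B0: "B0 \<in> P" "Suc n \<in> B0"
  shows "delete_last n P = insert (B0 - {Suc n}) (P - {B0}) - {{}}"
proof -
  have "{1..n} \<inter> C = C" if "C \<in> P" "C \<noteq> B0" for C
  proof -
    have "Suc n \<notin> C" using set_partition_block_eq[OF P that(1) B0(1)] B0(2) that(2) by blast
    then have "C \<subseteq> {1..n}" using set_partition_block(1)[OF P that(1)] by (auto simp: subset_iff le_Suc_eq)
    then show ?thesis by blast
  qed
  then have "(\<inter>) {1..n} ` (P - {B0}) = P - {B0}" by (force simp: image_iff)
  moreover have "{1..n} \<inter> B0 = B0 - {Suc n}" using set_partition_block(1)[OF P B0(1)] by auto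
  ultimately have "(\<inter>) {1..n} ` P = insert (B0 - {Suc n}) (P - {B0})"
    using B0(1) by (metis image_insert insert_Diff)
  then show ?thesis by (simp add: delete_last_def)
qed

lemma set_partitions_Suc_cases:
  assumes P: "P \<in> set_partitions (Suc n)"
  obtains "P = add_singleton n (delete_last n P)"
  | B where "B \<in> delete_last n P" "P = add_to_block n (delete_last n P) B"
proof -
  obtain B0 where B0: "B0 \<in> P" "Suc n \<in> B0" using set_partition_cover[OF P, of "Suc n"] by auto
  note del = delete_last_eq[OF P B0]
  have "{} \<notin> P" using set_partition_block(2)[OF P] by blast
  show thesis
  proof (cases "B0 = {Suc n}")
    case True
    then have "P = add_singleton n (delete_last n P)"
      using del B0(1) \<open>{} \<notin> P\<close> by (auto simp: add_singleton_def)
    then show thesis by (rule that(1))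
  next
    case False
    define B where "B = B0 - {Suc n}"
    have "B \<noteq> {}" using False B0(2) by (auto simp: B_def)
    have "B \<notin> P"
    proof
      assume "B \<in> P"
      then have "B = B0" using set_partition_block_eq[OF P _ B0(1)] \<open>B \<noteq> {}\<close> by (auto simp: B_def)
      then show False using B0(2) unfolding B_def by blast
    qed
    have del': "delete_last n P = insert B (P - {B0})"
      using del \<open>B \<noteq> {}\<close> \<open>{} \<notin> P\<close> by (auto simp: B_def)
    have "insert (Suc n) B = B0" using B0(2) by (auto simp: B_def)
    moreover have "insert B (P - {B0}) - {B} = P - {B0}" using \<open>B \<notin> P\<close> by auto
    ultimately have "P = add_to_block n (delete_last n P) B"
      using B0(1) by (auto simp: del' add_to_block_def)
    then show thesis using that(2)[of B] by (simp add: del')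
  qed
qed

lemma fiber_delete_last:
  assumes Q: "Q \<in> set_partitions n"
  shows "{P \<in> set_partitions (Suc n). delete_last n P = Q} = insert (add_singleton n Q) (add_to_block n Q ` Q)"
proof
  show "{P \<in> set_partitions (Suc n). delete_last n P = Q} \<subseteq> insert (add_singleton n Q) (add_to_block n Q ` Q)"
    by (auto elim: set_partitions_Suc_cases)
  show "insert (add_singleton n Q) (add_to_block n Q ` Q) \<subseteq> {P \<in> set_partitions (Suc n). delete_last n P = Q}"
    using Q by (auto simp: add_singleton_in_set_partitions add_to_block_in_set_partitions
        delete_last_add_singleton delete_last_add_to_block)
qed

lemma sum_set_partitions_Suc:
  "(\<Sum>P\<in>set_partitions (Suc n). f P) =
   (\<Sum>Q\<in>set_partitions n. f (add_singleton n Q) + (\<Sum>B\<in>Q. f (add_to_block n Q B)))"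
proof -
  have "(\<Sum>P\<in>set_partitions (Suc n). f P) =
      (\<Sum>Q\<in>set_partitions n. \<Sum>P | P \<in> set_partitions (Suc n) \<and> delete_last n P = Q. f P)"
    by (rule sum.group[symmetric]) (auto simp: finite_set_partitions delete_last_in_set_partitions)
  also have "\<dots> = (\<Sum>Q\<in>set_partitions n. f (add_singleton n Q) + (\<Sum>B\<in>Q. f (add_to_block n Q B)))"
  proof (rule sum.cong[OF refl])
    fix Q assume Q: "Q \<in> set_partitions n"
    have "finite Q" by (rule finite_set_partition[OF Q])
    then show "(\<Sum>P | P \<in> set_partitions (Suc n) \<and> delete_last n P = Q. f P) =
        f (add_singleton n Q) + (\<Sum>B\<in>Q. f (add_to_block n Q B))"
      using fiber_delete_last[OF Q] add_singleton_notin_add_to_block[OF Q]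
      by (simp add: sum.reindex[OF inj_on_add_to_block[OF Q]])
  qed
  finally show ?thesis .
qed

lemma sum_set_partitions_Suc_filter:
  assumes new: "\<And>Q. Q \<in> set_partitions n \<Longrightarrow> c (add_singleton n Q) \<longleftrightarrow> c' Q"
    and old: "\<And>Q B. Q \<in> set_partitions n \<Longrightarrow> B \<in> Q \<Longrightarrow> c (add_to_block n Q B) \<longleftrightarrow> c' Q \<and> B \<in> V Q"
    and V: "\<And>Q. Q \<in> set_partitions n \<Longrightarrow> V Q \<subseteq> Q"
  shows "(\<Sum>P | P \<in> set_partitions (Suc n) \<and> c P. f P) =
    (\<Sum>Q | Q \<in> set_partitions n \<and> c' Q. f (add_singleton n Q) + (\<Sum>B\<in>V Q. f (add_to_block n Q B)))"
proof -
  have "(\<Sum>B\<in>Q. if c (add_to_block n Q B) then f (add_to_block n Q B) else 0) =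
      (if c' Q then \<Sum>B\<in>V Q. f (add_to_block n Q B) else 0)" if Q: "Q \<in> set_partitions n" for Q
  proof -
    have "(\<Sum>B\<in>Q. if c (add_to_block n Q B) then f (add_to_block n Q B) else 0) =
        (\<Sum>B\<in>Q. if c' Q \<and> B \<in> V Q then f (add_to_block n Q B) else 0)"
      using old[OF Q] by (intro sum.cong) auto
    also have "\<dots> = (if c' Q then \<Sum>B\<in>V Q. f (add_to_block n Q B) else 0)"
      using V[OF Q] finite_set_partition[OF Q]
      by (simp add: sum.inter_restrict[symmetric] Int_absorb1)
    finally show ?thesis .
  qed
  then have "(\<Sum>Q\<in>set_partitions n. (if c (add_singleton n Q) then f (add_singleton n Q) else 0) +
      (\<Sum>B\<in>Q. if c (add_to_block n Q B) then f (add_to_block n Q B) else 0)) =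
    (\<Sum>Q\<in>set_partitions n. if c' Q then f (add_singleton n Q) + (\<Sum>B\<in>V Q. f (add_to_block n Q B)) else 0)"
    using new by (intro sum.cong refl) simp
  then have "(\<Sum>P\<in>set_partitions (Suc n). if c P then f P else 0) =
    (\<Sum>Q\<in>set_partitions n. if c' Q then f (add_singleton n Q) + (\<Sum>B\<in>V Q. f (add_to_block n Q B)) else 0)"
    by (simp only: sum_set_partitions_Suc)
  then show ?thesis
    by (simp add: sum.inter_filter finite_set_partitions)
qed

lemma Max_block:
  assumes "P \<in> set_partitions n" "B \<in> P"
  shows "Max B \<in> B" "1 \<le> Max B" "Max B \<le> n" "b \<in> B \<Longrightarrow> b \<le> Max B"
proof -
  show "Max B \<in> B" using set_partition_block[OF assms] by simp
  then show "1 \<le> Max B" "Max B \<le> n" using set_partition_block(1)[OF assms] by auto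
  show "b \<in> B \<Longrightarrow> b \<le> Max B" using set_partition_block(3)[OF assms] by simp
qed

lemma Max_block_inj_on: "P \<in> set_partitions n \<Longrightarrow> inj_on Max P"
  by (rule inj_onI) (metis Max_block(1) set_partition_block_eq)

lemma last_block:
  assumes "P \<in> set_partitions n" "1 \<le> n"
  obtains T where "T \<in> P" "Max T = n"
  using assms by (metis Max_block(3,4) set_partition_cover atLeastAtMost_iff order_antisym order_refl)

lemma card_add_singleton:
  assumes Q: "Q \<in> set_partitions n"
  shows "card (add_singleton n Q) = Suc (card Q)"
proof -
  have "{Suc n} \<notin> Q" using set_partition_block(1)[OF Q] by fastforce
  then show ?thesis using finite_set_partition[OF Q] by (simp add: add_singleton_def)
qed

lemma card_add_to_block:
  assumes Q: "Q \<in> set_partitions n" and B: "B \<in> Q"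
  shows "card (add_to_block n Q B) = card Q"
proof -
  have "insert (Suc n) B \<notin> Q" using set_partition_block(1)[OF Q] by fastforce
  moreover have "card Q > 0" using B finite_set_partition[OF Q] by (auto simp: card_gt_0_iff)
  ultimately show ?thesis
    using B finite_set_partition[OF Q] by (simp add: add_to_block_def)
qed

lemma card_set_partition_le:
  assumes P: "P \<in> set_partitions n"
  shows "card P \<le> n"
proof -
  have "card P = card (Max ` P)" using Max_block_inj_on[OF P] by (simp add: card_image)
  also have "\<dots> \<le> card {1..n}" using Max_block(2,3)[OF P] by (intro card_mono) auto
  finally show ?thesis by simp
qed

lemma sum_last_block:
  fixes x y :: "'a::comm_ring_1"
  assumes Q: "Q \<in> set_partitions n" and T: "T \<in> Q" "Max T = n"
  shows "(\<Sum>B\<in>Q. if Max B = n then y else x) = y + of_nat (card Q - 1) * x"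
proof -
  have "Max B \<noteq> n" if "B \<in> Q - {T}" for B
    using that T Max_block_inj_on[OF Q] by (auto dest: inj_onD)
  then have "(\<Sum>B\<in>Q - {T}. if Max B = n then y else x) = of_nat (card Q - 1) * x"
    using T(1) finite_set_partition[OF Q] by simp
  then show ?thesis
    using T finite_set_partition[OF Q] by (simp add: sum.remove)
qed

lemma sum_rank_last_block:
  fixes x y :: "'a::comm_ring_1"
  assumes Q: "Q \<in> set_partitions n" and V: "V \<subseteq> Q" and T: "T \<in> V" "Max T = n"
  shows "(\<Sum>B\<in>V. (if Max B = n then y else x) * g (card {C\<in>V. Max C < Max B})) =
    y * g (card V - 1) + x * (\<Sum>r<card V - 1. g r)"
proof -
  have fin: "finite V" using finite_subset[OF V finite_set_partition[OF Q]] .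
  have inj: "inj_on Max V" using Max_block_inj_on[OF Q] V by (rule inj_on_subset)
  have less: "Max B < n" if "B \<in> V - {T}" for B
    using that T V Max_block(3)[OF Q] inj_onD[OF inj] by (metis DiffE insertI1 le_neq_implies_less subsetD)
  have "{C\<in>V. Max C < Max T} = V - {T}" using less T by auto
  then have "(\<Sum>B\<in>V. (if Max B = n then y else x) * g (card {C\<in>V. Max C < Max B})) =
      y * g (card V - 1) + (\<Sum>B\<in>V - {T}. (if Max B = n then y else x) * g (card {C\<in>V. Max C < Max B}))"
    using fin T by (simp add: sum.remove)
  also have "(\<Sum>B\<in>V - {T}. (if Max B = n then y else x) * g (card {C\<in>V. Max C < Max B})) =
      (\<Sum>B\<in>V - {T}. x * g (card {C\<in>V - {T}. Max C < Max B}))"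
  proof (intro sum.cong refl)
    fix B assume B: "B \<in> V - {T}"
    then have "{C\<in>V. Max C < Max B} = {C\<in>V - {T}. Max C < Max B}" using less[OF B] T by auto
    then show "(if Max B = n then y else x) * g (card {C\<in>V. Max C < Max B}) =
        x * g (card {C\<in>V - {T}. Max C < Max B})" using less[OF B] by simp
  qed
  also have "(\<Sum>B\<in>V - {T}. x * g (card {C\<in>V - {T}. Max C < Max B})) =
      x * (\<Sum>B\<in>V - {T}. g (card {C\<in>V - {T}. Max C < Max B}))"
    by (rule sum_distrib_left[symmetric])
  also have "(\<Sum>B\<in>V - {T}. g (card {C\<in>V - {T}. Max C < Max B})) = (\<Sum>r<card V - 1. g r)"
    using sum_rank_reindex[OF _ inj_on_subset[OF inj], of "V - {T}" g] fin T by simp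
  finally show ?thesis .
qed

section \<open>Arcs and covers\<close>

definition block_arcs :: "nat set \<Rightarrow> (nat \<times> nat) set" where
  "block_arcs B = {(i, j). i < j \<and> i \<in> B \<and> j \<in> B \<and> (\<forall>k\<in>B. i < k \<longrightarrow> j \<le> k)}"

lemma Arc_eq_UN_block_arcs: "Arc P = (\<Union>B\<in>P. block_arcs B)"
  by (auto simp: Arc_def block_arcs_def)

lemma block_arcs_insert_greater:
  assumes "finite B" "B \<noteq> {}" "\<forall>b\<in>B. b < m"
  shows "block_arcs (insert m B) = insert (Max B, m) (block_arcs B)"
proof -
  have "Max B \<in> B" "\<forall>b\<in>B. b \<le> Max B" using assms by auto
  then show ?thesis
    using assms(3) by (auto simp: block_arcs_def) (meson leD order.strict_trans1 order_le_neq_trans)+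
qed

lemma Arc_subset: "P \<in> set_partitions n \<Longrightarrow> Arc P \<subseteq> {1..n} \<times> {1..n}"
  using set_partition_block(1) by (fastforce simp: Arc_def)

lemma finite_Arc: "P \<in> set_partitions n \<Longrightarrow> finite (Arc P)"
  using Arc_subset finite_subset by blast

lemma Arc_add_singleton: "Arc (add_singleton n Q) = Arc Q"
  by (auto simp: Arc_eq_UN_block_arcs add_singleton_def block_arcs_def)

lemma Arc_add_to_block:
  assumes Q: "Q \<in> set_partitions n" and B: "B \<in> Q"
  shows "Arc (add_to_block n Q B) = insert (Max B, Suc n) (Arc Q)"
proof -
  have "block_arcs (insert (Suc n) B) = insert (Max B, Suc n) (block_arcs B)"
    using set_partition_block[OF Q B] by (intro block_arcs_insert_greater) auto
  then show ?thesis using B by (auto simp: Arc_eq_UN_block_arcs add_to_block_def)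
qed

lemma last_arc_notin_Arc: "Q \<in> set_partitions n \<Longrightarrow> (i, Suc n) \<notin> Arc Q"
  using Arc_subset by fastforce

lemma card_Arc_add_to_block:
  assumes "Q \<in> set_partitions n" "B \<in> Q"
  shows "card (Arc (add_to_block n Q B)) = Suc (card (Arc Q))"
  using Arc_add_to_block[OF assms] last_arc_notin_Arc[OF assms(1)] finite_Arc[OF assms(1)] by simp

definition arc_weight :: "'a::comm_ring_1 \<Rightarrow> 'a \<Rightarrow> nat set set \<Rightarrow> 'a" where
  "arc_weight x y P = x ^ card (Arc P - Cov P) * y ^ card (Cov P)"

lemma arc_weight_empty: "arc_weight x y {} = 1"
  by (simp add: arc_weight_def Arc_def Cov_def)

lemma arc_weight_add_singleton: "arc_weight x y (add_singleton n Q) = arc_weight x y Q"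
  by (simp add: arc_weight_def Cov_def Arc_add_singleton)

lemma arc_weight_add_to_block:
  assumes Q: "Q \<in> set_partitions n" and B: "B \<in> Q"
  shows "arc_weight x y (add_to_block n Q B) = arc_weight x y Q * (if Max B = n then y else x)"
proof -
  let ?e = "(Max B, Suc n)"
  have Arc: "Arc (add_to_block n Q B) = insert ?e (Arc Q)" by (rule Arc_add_to_block[OF Q B])
  have fin: "finite (Cov Q)" "finite (Arc Q - Cov Q)"
    using finite_Arc[OF Q] by (auto simp: Cov_def intro: finite_subset)
  have new: "?e \<notin> Cov Q" "?e \<notin> Arc Q - Cov Q"
    using last_arc_notin_Arc[OF Q] by (auto simp: Cov_def)
  show ?thesis
  proof (cases "Max B = n")
    case True
    then have "Cov (add_to_block n Q B) = insert ?e (Cov Q)"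
      and "Arc (add_to_block n Q B) - Cov (add_to_block n Q B) = Arc Q - Cov Q"
      using Arc by (auto simp: Cov_def)
    then show ?thesis using fin new True by (simp add: arc_weight_def mult_ac)
  next
    case False
    then have "Cov (add_to_block n Q B) = Cov Q"
      and "Arc (add_to_block n Q B) - Cov (add_to_block n Q B) = insert ?e (Arc Q - Cov Q)"
      using Arc by (auto simp: Cov_def)
    then show ?thesis using fin new False by (simp add: arc_weight_def mult_ac)
  qed
qed

lemma arc_weight_diag:
  assumes "P \<in> set_partitions n"
  shows "arc_weight x x P = x ^ card (Arc P)"
proof -
  have "Cov P \<subseteq> Arc P" by (auto simp: Cov_def)
  then have "card (Arc P - Cov P) + card (Cov P) = card (Arc P)"
    using finite_Arc[OF assms] by (metis card_Diff_subset card_mono finite_subset le_add_diff_inverse2)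
  then show ?thesis by (metis arc_weight_def power_add)
qed

section \<open>All set partitions\<close>

text \<open>Refining by the number of blocks is what makes the recursion on \<open>n\<close> close.\<close>

definition Bxy_by_blocks :: "'a::comm_ring_1 \<Rightarrow> 'a \<Rightarrow> nat \<Rightarrow> (nat \<Rightarrow> 'a) \<Rightarrow> 'a" where
  "Bxy_by_blocks x y n f = (\<Sum>P\<in>set_partitions n. arc_weight x y P * f (card P))"

lemma Bxy_by_blocks_0: "Bxy_by_blocks x y 0 f = f 0"
  by (simp add: Bxy_by_blocks_def set_partitions_0 arc_weight_empty)

lemma Bxy_by_blocks_Suc:
  "Bxy_by_blocks x y (Suc n) f =
   (\<Sum>Q\<in>set_partitions n. arc_weight x y Q *
      (f (Suc (card Q)) + (\<Sum>B\<in>Q. if Max B = n then y else x) * f (card Q)))"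
  unfolding Bxy_by_blocks_def sum_set_partitions_Suc
proof (intro sum.cong refl)
  fix Q assume Q: "Q \<in> set_partitions n"
  have "(\<Sum>B\<in>Q. arc_weight x y (add_to_block n Q B) * f (card (add_to_block n Q B))) =
      (\<Sum>B\<in>Q. arc_weight x y Q * ((if Max B = n then y else x) * f (card Q)))"
    by (intro sum.cong refl) (simp add: arc_weight_add_to_block[OF Q] card_add_to_block[OF Q] mult_ac)
  then show "arc_weight x y (add_singleton n Q) * f (card (add_singleton n Q)) +
      (\<Sum>B\<in>Q. arc_weight x y (add_to_block n Q B) * f (card (add_to_block n Q B))) =
      arc_weight x y Q * (f (Suc (card Q)) + (\<Sum>B\<in>Q. if Max B = n then y else x) * f (card Q))"
    by (simp add: arc_weight_add_singleton card_add_singleton[OF Q] distrib_left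
        sum_distrib_left sum_distrib_right)
qed

lemma Bxy_by_blocks_add:
  "Bxy_by_blocks x y n (\<lambda>k. f k + g k) = Bxy_by_blocks x y n f + Bxy_by_blocks x y n g"
  by (simp add: Bxy_by_blocks_def distrib_left sum.distrib)

lemma Bxy_by_blocks_cmult: "Bxy_by_blocks x y n (\<lambda>k. c * f k) = c * Bxy_by_blocks x y n f"
  by (simp add: Bxy_by_blocks_def sum_distrib_left mult_ac)

lemma Bxy_by_blocks_Suc_diag:
  "Bxy_by_blocks x x (Suc n) f = Bxy_by_blocks x x n (\<lambda>k. f (Suc k) + of_nat k * x * f k)"
  unfolding Bxy_by_blocks_Suc by (simp add: Bxy_by_blocks_def)

lemma Bxy_by_blocks_Suc_Suc:
  "Bxy_by_blocks x y (Suc (Suc n)) f =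
   Bxy_by_blocks x y (Suc n) (\<lambda>k. f (Suc k) + (y + of_nat (k - 1) * x) * f k)"
proof -
  have last: "(\<Sum>B\<in>Q. if Max B = Suc n then y else x) = y + of_nat (card Q - 1) * x"
    if Q: "Q \<in> set_partitions (Suc n)" for Q
  proof -
    obtain T where "T \<in> Q" "Max T = Suc n" using last_block[OF Q] by auto
    then show ?thesis by (rule sum_last_block[OF Q])
  qed
  show ?thesis
    unfolding Bxy_by_blocks_Suc[of _ _ "Suc n"] by (simp add: Bxy_by_blocks_def last cong: sum.cong)
qed

lemma Bxy_by_blocks_Suc_binomial:
  "Bxy_by_blocks x y (Suc n) f =
   (\<Sum>j\<le>n. of_nat (n choose j) * y ^ (n - j) * Bxy_by_blocks x x j (\<lambda>k. f (Suc k)))"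
proof (induction n arbitrary: f)
  case 0
  show ?case unfolding Bxy_by_blocks_Suc by (simp add: set_partitions_0 Bxy_by_blocks_0 arc_weight_empty)
next
  case (Suc n)
  define A where "A j = Bxy_by_blocks x x j (\<lambda>k. f (Suc k))" for j
  have step: "Bxy_by_blocks x x j (\<lambda>k. f (Suc (Suc k)) + (y + of_nat k * x) * f (Suc k)) =
      A (Suc j) + y * A j" for j
  proof -
    have "(\<lambda>k. f (Suc (Suc k)) + (y + of_nat k * x) * f (Suc k)) =
        (\<lambda>k. (f (Suc (Suc k)) + of_nat k * x * f (Suc k)) + y * f (Suc k))"
      by (simp add: algebra_simps)
    then show ?thesis
      by (simp only: Bxy_by_blocks_add Bxy_by_blocks_cmult A_def Bxy_by_blocks_Suc_diag)
  qed
  have "Bxy_by_blocks x y (Suc (Suc n)) f =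
      (\<Sum>j\<le>n. of_nat (n choose j) * y ^ (n - j) * (A (Suc j) + y * A j))"
    unfolding Bxy_by_blocks_Suc_Suc Suc.IH by (simp add: step)
  also have "\<dots> = (\<Sum>j\<le>Suc n. of_nat (Suc n choose j) * y ^ (Suc n - j) * A j)"
    by (rule sum_choose_pascal)
  finally show ?case by (simp add: A_def)
qed

lemma Bxy_eq_Bxy_by_blocks: "Bxy n x y = Bxy_by_blocks x y n (\<lambda>_. 1)"
  by (simp add: Bxy_def Bxy_by_blocks_def arc_weight_def)

lemma Bxy_by_blocks_one: "Bxy_by_blocks x x n (\<lambda>_. 1) = Bx n x"
  by (simp add: Bx_def Bxy_eq_Bxy_by_blocks)

lemma Bxy_Suc_binomial:
  fixes x y :: "'a::comm_ring_1"
  shows "Bxy (n + 1) x y = (\<Sum>k=0..n. of_nat (n choose k) * Bx k x * y ^ (n - k))"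
  by (simp add: Bxy_eq_Bxy_by_blocks Bxy_by_blocks_Suc_binomial Bx_def atLeast0AtMost mult_ac)

section \<open>Singletons and feasible partitions\<close>

definition singletons :: "nat set set \<Rightarrow> nat set set" where
  "singletons P = {B\<in>P. card B = 1}"

lemma card_singletons_le: "P \<in> set_partitions n \<Longrightarrow> card (singletons P) \<le> card P"
  using finite_set_partition by (auto simp: singletons_def intro: card_mono)

lemma card_singletons_add_singleton:
  assumes Q: "Q \<in> set_partitions n"
  shows "card (singletons (add_singleton n Q)) = Suc (card (singletons Q))"
proof -
  have "singletons (add_singleton n Q) = insert {Suc n} (singletons Q)"
    by (auto simp: singletons_def add_singleton_def)
  moreover have "{Suc n} \<notin> singletons Q"
    using set_partition_block(1)[OF Q] by (fastforce simp: singletons_def)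
  ultimately show ?thesis
    using finite_set_partition[OF Q] by (simp add: singletons_def)
qed

lemma card_singletons_add_to_block:
  assumes Q: "Q \<in> set_partitions n" and B: "B \<in> Q"
  shows "card (singletons (add_to_block n Q B)) =
    (if card B = 1 then card (singletons Q) - 1 else card (singletons Q))"
proof -
  have "Suc n \<notin> B" "B \<noteq> {}" "finite B" using set_partition_block[OF Q B] by auto
  then have "card (insert (Suc n) B) \<noteq> 1" by (simp add: card_gt_0_iff)
  then have "singletons (add_to_block n Q B) = singletons Q - {B}"
    by (auto simp: singletons_def add_to_block_def)
  then show ?thesis
    using B finite_set_partition[OF Q] by (simp add: singletons_def card_Diff_singleton_if)
qed

lemma sum_if_singleton:
  fixes u v :: "'a::comm_ring_1"
  assumes Q: "Q \<in> set_partitions n"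
  shows "(\<Sum>B\<in>Q. if card B = 1 then u else v) =
    of_nat (card (singletons Q)) * u + of_nat (card Q - card (singletons Q)) * v"
proof -
  have "singletons Q \<subseteq> Q" "finite Q" using finite_set_partition[OF Q] by (auto simp: singletons_def)
  moreover have "Q \<inter> {B. card B = 1} = singletons Q" "Q \<inter> - {B. card B = 1} = Q - singletons Q"
    by (auto simp: singletons_def)
  ultimately show ?thesis
    by (simp add: sum.If_cases card_Diff_subset finite_subset)
qed

lemma feasible_iff_singletons_empty:
  assumes "P \<in> set_partitions n"
  shows "feasible P \<longleftrightarrow> singletons P = {}"
proof -
  have "card B \<noteq> 0" if "B \<in> P" for B using set_partition_block[OF assms that] by simp
  then show ?thesis by (force simp: feasible_def singletons_def)
qed

definition Bx_by_singletons :: "'a::comm_ring_1 \<Rightarrow> nat \<Rightarrow> (nat \<Rightarrow> nat \<Rightarrow> 'a) \<Rightarrow> 'a" where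
  "Bx_by_singletons x n F =
    (\<Sum>P\<in>set_partitions n. x ^ card (Arc P) * F (card P) (card (singletons P)))"

lemma Bx_by_singletons_0: "Bx_by_singletons x 0 F = F 0 0"
  by (simp add: Bx_by_singletons_def set_partitions_0 singletons_def Arc_def)

lemma Bx_by_singletons_cong:
  assumes "\<And>k s. s \<le> k \<Longrightarrow> k \<le> n \<Longrightarrow> F k s = G k s"
  shows "Bx_by_singletons x n F = Bx_by_singletons x n G"
  unfolding Bx_by_singletons_def using assms card_singletons_le card_set_partition_le
  by (simp cong: sum.cong)

lemma Bx_by_singletons_add:
  "Bx_by_singletons x n (\<lambda>k s. F k s + G k s) = Bx_by_singletons x n F + Bx_by_singletons x n G"
  by (simp add: Bx_by_singletons_def distrib_left sum.distrib)

lemma Bx_by_singletons_cmult: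
  "Bx_by_singletons x n (\<lambda>k s. c * F k s) = c * Bx_by_singletons x n F"
  by (simp add: Bx_by_singletons_def sum_distrib_left mult_ac)

lemma Bx_by_singletons_sum:
  "Bx_by_singletons x n (\<lambda>k s. \<Sum>t\<in>T. F t k s) = (\<Sum>t\<in>T. Bx_by_singletons x n (F t))"
  by (simp add: Bx_by_singletons_def sum_distrib_left sum.swap[of _ T])

lemma Bx_by_singletons_eq_Bxy_by_blocks:
  "Bx_by_singletons x n (\<lambda>k s. f k) = Bxy_by_blocks x x n f"
  by (simp add: Bx_by_singletons_def Bxy_by_blocks_def arc_weight_diag cong: sum.cong)

lemma Bx_by_singletons_Suc:
  "Bx_by_singletons x (Suc n) F = Bx_by_singletons x n
    (\<lambda>k s. F (Suc k) (Suc s) + x * (of_nat s * F k (s - 1) + of_nat (k - s) * F k s))"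
  unfolding Bx_by_singletons_def sum_set_partitions_Suc
proof (intro sum.cong refl)
  fix Q assume Q: "Q \<in> set_partitions n"
  let ?s = "card (singletons Q)"
  have "(\<Sum>B\<in>Q. x ^ card (Arc (add_to_block n Q B)) *
        F (card (add_to_block n Q B)) (card (singletons (add_to_block n Q B)))) =
      x * x ^ card (Arc Q) * (\<Sum>B\<in>Q. if card B = 1 then F (card Q) (?s - 1) else F (card Q) ?s)"
    by (simp add: sum_distrib_left card_Arc_add_to_block[OF Q] card_add_to_block[OF Q]
        card_singletons_add_to_block[OF Q] if_distrib[of "F (card Q)"])
  also have "\<dots> = x * x ^ card (Arc Q) *
      (of_nat ?s * F (card Q) (?s - 1) + of_nat (card Q - ?s) * F (card Q) ?s)"
    by (simp only: sum_if_singleton[OF Q])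
  finally show "x ^ card (Arc (add_singleton n Q)) * F (card (add_singleton n Q)) (card (singletons (add_singleton n Q))) +
      (\<Sum>B\<in>Q. x ^ card (Arc (add_to_block n Q B)) *
        F (card (add_to_block n Q B)) (card (singletons (add_to_block n Q B)))) =
      x ^ card (Arc Q) * (F (Suc (card Q)) (Suc ?s) +
        x * (of_nat ?s * F (card Q) (?s - 1) + of_nat (card Q - ?s) * F (card Q) ?s))"
    by (simp add: Arc_add_singleton card_add_singleton[OF Q] card_singletons_add_singleton[OF Q]
        algebra_simps)
qed

lemma Bx_by_singletons_Suc_choose:
  "Bx_by_singletons x (Suc n) (\<lambda>k s. f k * of_nat (s choose Suc t)) =
   Bx_by_singletons x n (\<lambda>k s. f (Suc k) * of_nat (s choose Suc t)) +
   Bx_by_singletons x n (\<lambda>k s. f (Suc k) * of_nat (s choose t)) +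
   x * Bx_by_singletons x n (\<lambda>k s. of_nat (k - Suc t) * f k * of_nat (s choose Suc t))"
proof -
  have "Bx_by_singletons x (Suc n) (\<lambda>k s. f k * of_nat (s choose Suc t)) =
      Bx_by_singletons x n (\<lambda>k s. f (Suc k) * of_nat (s choose Suc t) + f (Suc k) * of_nat (s choose t) +
        x * (of_nat (k - Suc t) * f k * of_nat (s choose Suc t)))"
    unfolding Bx_by_singletons_Suc
  proof (rule Bx_by_singletons_cong)
    fix k s :: nat assume "s \<le> k" "k \<le> n"
    then have absorb: "of_nat s * of_nat (s - 1 choose Suc t) + of_nat (k - s) * of_nat (s choose Suc t) =
        (of_nat (k - Suc t) * of_nat (s choose Suc t) :: 'a)"
      by (metis choose_absorb_sum of_nat_add of_nat_mult)
    have "f (Suc k) * of_nat (Suc s choose Suc t) + x * (of_nat s * (f k * of_nat (s - 1 choose Suc t)) +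
          of_nat (k - s) * (f k * of_nat (s choose Suc t))) =
        f (Suc k) * (of_nat (s choose Suc t) + of_nat (s choose t)) +
          x * f k * (of_nat s * of_nat (s - 1 choose Suc t) + of_nat (k - s) * of_nat (s choose Suc t))"
      by (simp add: algebra_simps)
    also have "\<dots> = f (Suc k) * (of_nat (s choose Suc t) + of_nat (s choose t)) +
        x * f k * (of_nat (k - Suc t) * of_nat (s choose Suc t))"
      by (simp only: absorb)
    finally show "f (Suc k) * of_nat (Suc s choose Suc t) + x * (of_nat s * (f k * of_nat (s - 1 choose Suc t)) +
          of_nat (k - s) * (f k * of_nat (s choose Suc t))) =
        f (Suc k) * of_nat (s choose Suc t) + f (Suc k) * of_nat (s choose t) +
          x * (of_nat (k - Suc t) * f k * of_nat (s choose Suc t))"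
      by (simp add: algebra_simps)
  qed
  then show ?thesis by (simp only: Bx_by_singletons_add Bx_by_singletons_cmult)
qed

text \<open>Marking \<open>t\<close> singletons and deleting them leaves a partition of \<open>[n - t]\<close> with \<open>t\<close> fewer
  blocks; the induction on \<open>n\<close> avoids the relabelling this correspondence would need.\<close>

lemma Bx_by_singletons_choose:
  "Bx_by_singletons x n (\<lambda>k s. f k * of_nat (s choose t)) =
   of_nat (n choose t) * Bxy_by_blocks x x (n - t) (\<lambda>k. f (k + t))"
proof (induction n arbitrary: f t)
  case 0
  show ?case by (cases t) (simp_all add: Bx_by_singletons_0 Bxy_by_blocks_0)
next
  case (Suc n)
  show ?case
  proof (cases t)
    case 0
    then show ?thesis by (simp add: Bx_by_singletons_eq_Bxy_by_blocks)
  next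
    case (Suc t')
    define X where "X = Bxy_by_blocks x x (n - t) (\<lambda>k. f (Suc (k + t))) +
      x * Bxy_by_blocks x x (n - t) (\<lambda>k. of_nat k * f (k + t))"
    have IH: "Bx_by_singletons x n (\<lambda>k s. g k * of_nat (s choose u)) =
        of_nat (n choose u) * Bxy_by_blocks x x (n - u) (\<lambda>k. g (k + u))" for g u
      by (rule Suc.IH)
    have "Bx_by_singletons x (Suc n) (\<lambda>k s. f k * of_nat (s choose t)) =
        of_nat (n choose t) * X + of_nat (n choose t') * Bxy_by_blocks x x (n - t') (\<lambda>k. f (k + t))"
      unfolding \<open>t = Suc t'\<close> Bx_by_singletons_Suc_choose IH X_def by (simp add: algebra_simps)
    also have "\<dots> = of_nat (Suc n choose t) * Bxy_by_blocks x x (Suc n - t) (\<lambda>k. f (k + t))"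
    proof (cases "t \<le> n")
      case True
      then have "n - t' = Suc (n - t)" using Suc by simp
      moreover have "(\<lambda>k. f (Suc k + t) + of_nat k * x * f (k + t)) =
          (\<lambda>k. f (Suc (k + t)) + x * (of_nat k * f (k + t)))"
        by (simp add: mult_ac)
      ultimately have "Bxy_by_blocks x x (n - t') (\<lambda>k. f (k + t)) = X"
        by (simp only: X_def Bxy_by_blocks_Suc_diag Bxy_by_blocks_add Bxy_by_blocks_cmult)
      then show ?thesis using Suc True by (simp add: Suc_diff_le algebra_simps)
    next
      case False
      then show ?thesis using Suc by (simp add: binomial_eq_0)
    qed
    finally show ?thesis .
  qed
qed

lemma Fe_eq_alternating_sum:
  fixes x :: "'a::comm_ring_1"
  shows "Fe k x = (\<Sum>i\<le>k. of_nat (k choose i) * Bx i x * (- 1) ^ (k - i))"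
proof -
  have "Fe k x = (\<Sum>P\<in>set_partitions k. if feasible P then x ^ card (Arc P) else 0)"
    by (simp add: Fe_def sum.inter_filter finite_set_partitions)
  also have "\<dots> = Bx_by_singletons x k (\<lambda>q s. if s = 0 then 1 else 0)"
    unfolding Bx_by_singletons_def
  proof (intro sum.cong refl)
    fix P assume P: "P \<in> set_partitions k"
    have "finite (singletons P)" using finite_set_partition[OF P] by (simp add: singletons_def)
    then show "(if feasible P then x ^ card (Arc P) else 0) =
        x ^ card (Arc P) * (if card (singletons P) = 0 then 1 else 0)"
      using feasible_iff_singletons_empty[OF P] by simp
  qed
  also have "\<dots> = Bx_by_singletons x k (\<lambda>q s. \<Sum>t\<le>k. (- 1) ^ t * of_nat (s choose t))"
    by (rule Bx_by_singletons_cong) (simp add: alternating_sum_choose_le)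
  also have "\<dots> = (\<Sum>t\<le>k. (- 1) ^ t * (of_nat (k choose t) * Bx (k - t) x))"
  proof -
    have "Bx_by_singletons x k (\<lambda>q s. of_nat (s choose t)) = of_nat (k choose t) * Bx (k - t) x" for t
      using Bx_by_singletons_choose[of x k "\<lambda>_. 1" t] by (simp add: Bxy_by_blocks_one)
    then show ?thesis by (simp only: Bx_by_singletons_sum Bx_by_singletons_cmult)
  qed
  also have "\<dots> = (\<Sum>i\<le>k. (- 1) ^ (k - i) * (of_nat (k choose (k - i)) * Bx (k - (k - i)) x))"
    by (rule sum.reindex_bij_witness[where i="\<lambda>i. k - i" and j="\<lambda>i. k - i"]) auto
  also have "\<dots> = (\<Sum>i\<le>k. of_nat (k choose i) * Bx i x * (- 1) ^ (k - i))"
  proof (intro sum.cong refl)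
    fix i assume "i \<in> {..k}"
    then show "(- 1) ^ (k - i) * (of_nat (k choose (k - i)) * Bx (k - (k - i)) x) =
        of_nat (k choose i) * Bx i x * (- 1) ^ (k - i)"
      using binomial_symmetric[of i k] by (simp add: mult_ac)
  qed
  finally show ?thesis .
qed

lemma Bx_binomial_eq_Fe_binomial:
  fixes x y :: "'a::comm_ring_1"
  shows "(\<Sum>k=0..n. of_nat (n choose k) * Bx k x * y ^ (n - k)) =
    (\<Sum>k=0..n. of_nat (n choose k) * Fe k x * (y + 1) ^ (n - k))"
proof -
  have "(\<Sum>k=0..n. of_nat (n choose k) * Fe k x * (y + 1) ^ (n - k)) =
      (\<Sum>k\<le>n. of_nat (n choose k) * (y + 1) ^ (n - k) *
        (\<Sum>i\<le>k. of_nat (k choose i) * Bx i x * (- 1) ^ (k - i)))"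
    by (simp add: atLeast0AtMost Fe_eq_alternating_sum mult_ac)
  also have "\<dots> = (\<Sum>i\<le>n. of_nat (n choose i) * Bx i x * (y + 1 + - 1) ^ (n - i))"
    by (rule binomial_transform_compose)
  finally show ?thesis by (simp add: atLeast0AtMost)
qed

section \<open>Noncrossing partitions\<close>

definition covered :: "nat set set \<Rightarrow> nat \<Rightarrow> bool" where
  "covered P m \<longleftrightarrow> (\<exists>i k. (i, k) \<in> Arc P \<and> i < m \<and> m < k)"

text \<open>The visible blocks are exactly those to which \<open>n + 1\<close> can be appended without creating a
  crossing (\<open>noncrossing_add_to_block\<close>).\<close>

definition visible_blocks :: "nat set set \<Rightarrow> nat set set" where
  "visible_blocks P = {B\<in>P. \<not> covered P (Max B)}"

lemma visible_blocks_subset: "visible_blocks P \<subseteq> P"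
  by (auto simp: visible_blocks_def)

lemma finite_visible_blocks: "P \<in> set_partitions n \<Longrightarrow> finite (visible_blocks P)"
  using finite_subset[OF visible_blocks_subset finite_set_partition] .

lemma not_covered_ge: "P \<in> set_partitions n \<Longrightarrow> n \<le> m \<Longrightarrow> \<not> covered P m"
  using Arc_subset by (fastforce simp: covered_def)

lemma noncrossing_add_singleton: "noncrossing (add_singleton n Q) \<longleftrightarrow> noncrossing Q"
  by (simp add: noncrossing_def Arc_add_singleton)

lemma noncrossing_add_to_block:
  assumes Q: "Q \<in> set_partitions n" and B: "B \<in> Q"
  shows "noncrossing (add_to_block n Q B) \<longleftrightarrow> noncrossing Q \<and> \<not> covered Q (Max B)"
proof -
  have le: "k \<le> n" if "(i, k) \<in> Arc Q" for i k using Arc_subset[OF Q] that by auto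
  have lt: "k < Suc n" if "(i, k) \<in> Arc Q" for i k using le[OF that] by simp
  show ?thesis
    unfolding noncrossing_def covered_def Arc_add_to_block[OF Q B]
    by (auto dest: le) (blast dest: lt)
qed

lemma covered_add_to_block:
  assumes Q: "Q \<in> set_partitions n" and B: "B \<in> Q"
  shows "covered (add_to_block n Q B) m \<longleftrightarrow> covered Q m \<or> (Max B < m \<and> m < Suc n)"
  unfolding covered_def Arc_add_to_block[OF Q B] by auto

lemma visible_blocks_add_singleton:
  assumes Q: "Q \<in> set_partitions n"
  shows "visible_blocks (add_singleton n Q) = insert {Suc n} (visible_blocks Q)"
  using not_covered_ge[OF Q, of "Suc n"]
  by (auto simp: visible_blocks_def add_singleton_def covered_def Arc_add_singleton[unfolded add_singleton_def])

lemma visible_blocks_add_to_block: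
  assumes Q: "Q \<in> set_partitions n" and B: "B \<in> visible_blocks Q"
  shows "visible_blocks (add_to_block n Q B) =
    insert (insert (Suc n) B) {C\<in>visible_blocks Q. Max C < Max B}"
proof -
  have BQ: "B \<in> Q" using B by (simp add: visible_blocks_def)
  have "Max (insert (Suc n) B) = max (Suc n) (Max B)" using set_partition_block(2,3)[OF Q BQ] by simp
  then have Max_new: "Max (insert (Suc n) B) = Suc n" using Max_block(3)[OF Q BQ] by linarith
  have neq: "Max C \<noteq> Max B" if "C \<in> Q" "C \<noteq> B" for C
    using that BQ Max_block_inj_on[OF Q] by (auto dest: inj_onD)
  have lt: "Max C < Suc n" if "C \<in> Q" for C using Max_block(3)[OF Q that] by simp
  have top: "\<not> covered Q (Suc n)" by (rule not_covered_ge[OF Q]) simp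
  note cov = covered_add_to_block[OF Q BQ]
  show ?thesis
  proof (intro equalityI subsetI)
    fix C assume C: "C \<in> visible_blocks (add_to_block n Q B)"
    show "C \<in> insert (insert (Suc n) B) {C\<in>visible_blocks Q. Max C < Max B}"
    proof (cases "C = insert (Suc n) B")
      case False
      then have CQ: "C \<in> Q" "C \<noteq> B" using C by (auto simp: visible_blocks_def add_to_block_def)
      have "\<not> covered Q (Max C)" "\<not> Max B < Max C"
        using C cov lt[OF CQ(1)] by (auto simp: visible_blocks_def)
      then show ?thesis using CQ neq[OF CQ] by (auto simp: visible_blocks_def)
    qed simp
  next
    fix C assume C: "C \<in> insert (insert (Suc n) B) {C\<in>visible_blocks Q. Max C < Max B}"
    show "C \<in> visible_blocks (add_to_block n Q B)"
    proof (cases "C = insert (Suc n) B")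
      case True
      then show ?thesis using top cov Max_new by (simp add: visible_blocks_def add_to_block_def)
    next
      case False
      then have "C \<in> Q" "\<not> covered Q (Max C)" "Max C < Max B" using C by (auto simp: visible_blocks_def)
      then show ?thesis using cov by (auto simp: visible_blocks_def add_to_block_def)
    qed
  qed
qed

lemma card_visible_blocks_add_singleton:
  assumes Q: "Q \<in> set_partitions n"
  shows "card (visible_blocks (add_singleton n Q)) = Suc (card (visible_blocks Q))"
proof -
  have "{Suc n} \<notin> visible_blocks Q"
    using set_partition_block(1)[OF Q] visible_blocks_subset by fastforce
  then show ?thesis
    using visible_blocks_add_singleton[OF Q] finite_visible_blocks[OF Q] by simp
qed

lemma card_visible_blocks_add_to_block:
  assumes Q: "Q \<in> set_partitions n" and B: "B \<in> visible_blocks Q"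
  shows "card (visible_blocks (add_to_block n Q B)) = Suc (card {C\<in>visible_blocks Q. Max C < Max B})"
proof -
  have "insert (Suc n) B \<notin> visible_blocks Q"
    using set_partition_block(1)[OF Q] visible_blocks_subset by fastforce
  then show ?thesis
    using visible_blocks_add_to_block[OF Q B] finite_visible_blocks[OF Q] by simp
qed

lemma NC_0: "NC 0 = {{}}"
  by (auto simp: NC_def set_partitions_0 noncrossing_def Arc_def)

lemma poor_add_singleton: "poor (add_singleton n Q) \<longleftrightarrow> poor Q"
  by (simp add: poor_def add_singleton_def)

lemma poor_add_to_block:
  assumes Q: "Q \<in> set_partitions n" and B: "B \<in> Q"
  shows "poor (add_to_block n Q B) \<longleftrightarrow> poor Q \<and> card B = 1"
proof -
  have "Suc n \<notin> B" "finite B" "B \<noteq> {}" using set_partition_block[OF Q B] by auto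
  then have "card (insert (Suc n) B) = Suc (card B)" "card B \<noteq> 0" by auto
  then show ?thesis using B by (auto simp: poor_def add_to_block_def)
qed

definition visible_singletons :: "nat set set \<Rightarrow> nat set set" where
  "visible_singletons P = {B\<in>visible_blocks P. card B = 1}"

lemma card_visible_singletons_add_singleton:
  assumes Q: "Q \<in> set_partitions n"
  shows "card (visible_singletons (add_singleton n Q)) = Suc (card (visible_singletons Q))"
proof -
  have "visible_singletons (add_singleton n Q) = insert {Suc n} (visible_singletons Q)"
    by (auto simp: visible_singletons_def visible_blocks_add_singleton[OF Q])
  moreover have "{Suc n} \<notin> visible_singletons Q"
    using set_partition_block(1)[OF Q] visible_blocks_subset by (fastforce simp: visible_singletons_def)
  ultimately show ?thesis
    using finite_visible_blocks[OF Q] by (simp add: visible_singletons_def)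
qed

lemma visible_singletons_add_to_block:
  assumes Q: "Q \<in> set_partitions n" and B: "B \<in> visible_blocks Q"
  shows "visible_singletons (add_to_block n Q B) = {C\<in>visible_singletons Q. Max C < Max B}"
proof -
  have BQ: "B \<in> Q" using B visible_blocks_subset by auto
  have "Suc n \<notin> B" "finite B" "B \<noteq> {}" using set_partition_block[OF Q BQ] by auto
  then have "card (insert (Suc n) B) \<noteq> 1" by (simp add: card_gt_0_iff)
  then show ?thesis by (auto simp: visible_singletons_def visible_blocks_add_to_block[OF Q B])
qed

definition Mo_by_visible_singletons :: "'a::comm_ring_1 \<Rightarrow> nat \<Rightarrow> (nat \<Rightarrow> 'a) \<Rightarrow> 'a" where
  "Mo_by_visible_singletons x n f =
    (\<Sum>P\<in>{P\<in>NC n. poor P}. x ^ card (Arc P) * f (card (visible_singletons P)))"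

lemma Mo_by_visible_singletons_0: "Mo_by_visible_singletons x 0 f = f 0"
proof -
  have "{P\<in>NC 0. poor P} = {{}}" by (auto simp: NC_0 poor_def)
  then show ?thesis
    by (simp add: Mo_by_visible_singletons_def visible_singletons_def visible_blocks_def Arc_def)
qed

lemma Mo_by_visible_singletons_add:
  "Mo_by_visible_singletons x n (\<lambda>v. f v + g v) =
   Mo_by_visible_singletons x n f + Mo_by_visible_singletons x n g"
  by (simp add: Mo_by_visible_singletons_def distrib_left sum.distrib)

lemma Mo_by_visible_singletons_cmult:
  "Mo_by_visible_singletons x n (\<lambda>v. c * f v) = c * Mo_by_visible_singletons x n f"
  by (simp add: Mo_by_visible_singletons_def sum_distrib_left mult_ac)

lemma sum_visible_singletons_add_to_block:
  fixes x :: "'a::comm_ring_1"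
  assumes Q: "Q \<in> set_partitions n"
  shows "(\<Sum>B\<in>visible_singletons Q. x ^ card (Arc (add_to_block n Q B)) *
      f (card (visible_singletons (add_to_block n Q B)))) =
    x * x ^ card (Arc Q) * (\<Sum>r<card (visible_singletons Q). f r)"
proof -
  have sub: "visible_singletons Q \<subseteq> Q"
    using visible_blocks_subset by (auto simp: visible_singletons_def)
  have "x ^ card (Arc (add_to_block n Q B)) * f (card (visible_singletons (add_to_block n Q B))) =
      x * x ^ card (Arc Q) * f (card {C\<in>visible_singletons Q. Max C < Max B})"
    if B: "B \<in> visible_singletons Q" for B
  proof -
    have BV: "B \<in> visible_blocks Q" using B by (simp add: visible_singletons_def)
    then show ?thesis using sub B
      by (auto simp: card_Arc_add_to_block[OF Q] visible_singletons_add_to_block[OF Q BV])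
  qed
  then have "(\<Sum>B\<in>visible_singletons Q. x ^ card (Arc (add_to_block n Q B)) *
        f (card (visible_singletons (add_to_block n Q B)))) =
      x * x ^ card (Arc Q) * (\<Sum>B\<in>visible_singletons Q. f (card {C\<in>visible_singletons Q. Max C < Max B}))"
    by (simp add: sum_distrib_left)
  also have "\<dots> = x * x ^ card (Arc Q) * (\<Sum>r<card (visible_singletons Q). f r)"
    using sum_rank_reindex[OF finite_subset[OF sub finite_set_partition[OF Q]]
        inj_on_subset[OF Max_block_inj_on[OF Q] sub], where h = f] by simp
  finally show ?thesis .
qed

lemma Mo_by_visible_singletons_Suc:
  "Mo_by_visible_singletons x (Suc n) f =
   Mo_by_visible_singletons x n (\<lambda>v. f (Suc v) + x * (\<Sum>r<v. f r))"
proof -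
  have NC_poor: "{P\<in>NC m. poor P} = {P. P \<in> set_partitions m \<and> noncrossing P \<and> poor P}" for m
    by (auto simp: NC_def)
  have "Mo_by_visible_singletons x (Suc n) f =
      (\<Sum>Q\<in>{P\<in>NC n. poor P}. x ^ card (Arc (add_singleton n Q)) *
          f (card (visible_singletons (add_singleton n Q))) +
        (\<Sum>B\<in>visible_singletons Q. x ^ card (Arc (add_to_block n Q B)) *
          f (card (visible_singletons (add_to_block n Q B)))))"
    unfolding Mo_by_visible_singletons_def NC_poor
    by (rule sum_set_partitions_Suc_filter)
      (auto simp: noncrossing_add_singleton noncrossing_add_to_block poor_add_singleton
        poor_add_to_block visible_singletons_def visible_blocks_def)
  also have "\<dots> = Mo_by_visible_singletons x n (\<lambda>v. f (Suc v) + x * (\<Sum>r<v. f r))"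
    unfolding Mo_by_visible_singletons_def
  proof (intro sum.cong refl)
    fix Q assume "Q \<in> {P\<in>NC n. poor P}"
    then have Q: "Q \<in> set_partitions n" by (simp add: NC_def)
    show "x ^ card (Arc (add_singleton n Q)) * f (card (visible_singletons (add_singleton n Q))) +
        (\<Sum>B\<in>visible_singletons Q. x ^ card (Arc (add_to_block n Q B)) *
          f (card (visible_singletons (add_to_block n Q B)))) =
        x ^ card (Arc Q) * (f (Suc (card (visible_singletons Q))) + x * (\<Sum>r<card (visible_singletons Q). f r))"
      unfolding sum_visible_singletons_add_to_block[OF Q]
      by (simp add: Arc_add_singleton card_visible_singletons_add_singleton[OF Q] algebra_simps)
  qed
  finally show ?thesis .
qed

definition Cxy_by_visible :: "'a::comm_ring_1 \<Rightarrow> 'a \<Rightarrow> nat \<Rightarrow> (nat \<Rightarrow> 'a) \<Rightarrow> 'a" where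
  "Cxy_by_visible x y n f = (\<Sum>P\<in>NC n. arc_weight x y P * f (card (visible_blocks P)))"

lemma Cxy_by_visible_Suc:
  "Cxy_by_visible x y (Suc n) f =
   (\<Sum>Q\<in>NC n. arc_weight x y Q * (f (Suc (card (visible_blocks Q))) +
      (\<Sum>B\<in>visible_blocks Q. (if Max B = n then y else x) *
         f (Suc (card {C\<in>visible_blocks Q. Max C < Max B})))))"
proof -
  have "Cxy_by_visible x y (Suc n) f =
      (\<Sum>Q\<in>NC n. arc_weight x y (add_singleton n Q) * f (card (visible_blocks (add_singleton n Q))) +
        (\<Sum>B\<in>visible_blocks Q. arc_weight x y (add_to_block n Q B) *
           f (card (visible_blocks (add_to_block n Q B)))))"
    unfolding Cxy_by_visible_def NC_def
    by (rule sum_set_partitions_Suc_filter)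
      (simp_all add: noncrossing_add_singleton noncrossing_add_to_block visible_blocks_def)
  also have "\<dots> = (\<Sum>Q\<in>NC n. arc_weight x y Q * (f (Suc (card (visible_blocks Q))) +
      (\<Sum>B\<in>visible_blocks Q. (if Max B = n then y else x) *
         f (Suc (card {C\<in>visible_blocks Q. Max C < Max B})))))"
  proof (intro sum.cong refl)
    fix Q assume "Q \<in> NC n"
    then have Q: "Q \<in> set_partitions n" by (simp add: NC_def)
    have "arc_weight x y (add_to_block n Q B) * f (card (visible_blocks (add_to_block n Q B))) =
        arc_weight x y Q * ((if Max B = n then y else x) *
          f (Suc (card {C\<in>visible_blocks Q. Max C < Max B})))"
      if B: "B \<in> visible_blocks Q" for B
    proof -
      have "B \<in> Q" using B visible_blocks_subset by blast
      then show ?thesis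
        by (simp add: arc_weight_add_to_block[OF Q] card_visible_blocks_add_to_block[OF Q B] mult_ac)
    qed
    then show "arc_weight x y (add_singleton n Q) * f (card (visible_blocks (add_singleton n Q))) +
        (\<Sum>B\<in>visible_blocks Q. arc_weight x y (add_to_block n Q B) *
          f (card (visible_blocks (add_to_block n Q B)))) =
        arc_weight x y Q * (f (Suc (card (visible_blocks Q))) +
        (\<Sum>B\<in>visible_blocks Q. (if Max B = n then y else x) *
          f (Suc (card {C\<in>visible_blocks Q. Max C < Max B}))))"
      by (simp add: arc_weight_add_singleton card_visible_blocks_add_singleton[OF Q]
          distrib_left sum_distrib_left cong: sum.cong)
  qed
  finally show ?thesis .
qed

lemma Cxy_by_visible_Suc_Suc:
  fixes x y :: "'a::comm_ring_1"
  shows "Cxy_by_visible x y (Suc (Suc n)) f =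
    Cxy_by_visible x y (Suc n) (\<lambda>v. f (Suc v) + y * f v + x * (\<Sum>r<v - 1. f (Suc r)))"
proof -
  have "(\<Sum>B\<in>visible_blocks Q. (if Max B = Suc n then y else x) *
        f (Suc (card {C\<in>visible_blocks Q. Max C < Max B}))) =
      y * f (card (visible_blocks Q)) + x * (\<Sum>r<card (visible_blocks Q) - 1. f (Suc r))"
    if "Q \<in> NC (Suc n)" for Q
  proof -
    have Q: "Q \<in> set_partitions (Suc n)" using that by (simp add: NC_def)
    obtain T where T: "T \<in> Q" "Max T = Suc n" using last_block[OF Q] by auto
    then have TV: "T \<in> visible_blocks Q" using not_covered_ge[OF Q] by (simp add: visible_blocks_def)
    then have "card (visible_blocks Q) \<noteq> 0" using finite_visible_blocks[OF Q] by auto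
    then show ?thesis
      using sum_rank_last_block[OF Q visible_blocks_subset TV T(2), of y x "\<lambda>r. f (Suc r)"] by simp
  qed
  then show ?thesis
    unfolding Cxy_by_visible_Suc[of _ _ "Suc n"]
    by (simp add: Cxy_by_visible_def algebra_simps cong: sum.cong)
qed

lemma Cxy_by_visible_Suc_binomial:
  "Cxy_by_visible x y (Suc n) f =
   (\<Sum>j\<le>n. of_nat (n choose j) * y ^ (n - j) * Mo_by_visible_singletons x j (\<lambda>v. f (Suc v)))"
proof (induction n arbitrary: f)
  case 0
  show ?case
    unfolding Cxy_by_visible_Suc
    by (simp add: NC_0 arc_weight_empty visible_blocks_def Mo_by_visible_singletons_0)
next
  case (Suc n)
  define A where "A j = Mo_by_visible_singletons x j (\<lambda>v. f (Suc v))" for j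
  have step: "Mo_by_visible_singletons x j
      (\<lambda>v. f (Suc (Suc v)) + y * f (Suc v) + x * (\<Sum>r<v. f (Suc r))) = A (Suc j) + y * A j" for j
  proof -
    have "(\<lambda>v. f (Suc (Suc v)) + y * f (Suc v) + x * (\<Sum>r<v. f (Suc r))) =
        (\<lambda>v. (f (Suc (Suc v)) + x * (\<Sum>r<v. f (Suc r))) + y * f (Suc v))"
      by (simp add: algebra_simps)
    then show ?thesis
      by (simp only: Mo_by_visible_singletons_add Mo_by_visible_singletons_cmult A_def
          Mo_by_visible_singletons_Suc)
  qed
  have "Cxy_by_visible x y (Suc (Suc n)) f =
      (\<Sum>j\<le>n. of_nat (n choose j) * y ^ (n - j) * (A (Suc j) + y * A j))"
    unfolding Cxy_by_visible_Suc_Suc Suc.IH by (simp add: step)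
  also have "\<dots> = (\<Sum>j\<le>Suc n. of_nat (Suc n choose j) * y ^ (Suc n - j) * A j)"
    by (rule sum_choose_pascal)
  finally show ?case by (simp add: A_def)
qed

lemma Cxy_Suc_binomial:
  fixes x y :: "'a::comm_ring_1"
  shows "Cxy (n + 1) x y = (\<Sum>k=0..n. of_nat (n choose k) * Mo k x * y ^ (n - k))"
proof -
  have "Cxy m x y = Cxy_by_visible x y m (\<lambda>_. 1)" "Mo m x = Mo_by_visible_singletons x m (\<lambda>_. 1)" for m
    by (simp_all add: Cxy_def Cxy_by_visible_def arc_weight_def Mo_def Mo_by_visible_singletons_def)
  then show ?thesis
    by (simp add: Cxy_by_visible_Suc_binomial atLeast0AtMost mult_ac)
qed

section \<open>Ballot numbers and the Motzkin polynomials\<close>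

text \<open>\<open>ballot j h = C(2j+h, j) - C(2j+h, j-1)\<close>; \<open>ballot_add_choose\<close> states this additively to avoid
  truncated subtraction.\<close>

fun ballot :: "nat \<Rightarrow> nat \<Rightarrow> nat" where
  "ballot 0 h = 1"
| "ballot (Suc j) 0 = ballot j 1"
| "ballot (Suc j) (Suc h) = ballot (Suc j) h + ballot j (Suc (Suc h))"

lemma ballot_add_choose:
  "ballot j h + (if j = 0 then 0 else (2 * j + h) choose (j - 1)) = (2 * j + h) choose j"
proof (induction j h rule: ballot.induct)
  case (1 h)
  then show ?case by simp
next
  case (2 j)
  let ?N = "Suc (2 * j)"
  have "2 * j + 1 = ?N" by simp
  then have "ballot j 1 + (if j = 0 then 0 else ?N choose (j - 1)) = ?N choose j"
    using 2 by (simp only:)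
  moreover have "Suc ?N choose Suc j = (?N choose j) + (?N choose Suc j)" by (rule binomial_Suc_Suc)
  moreover have "?N choose Suc j = ?N choose j" using binomial_symmetric[of j ?N] by simp
  moreover have "Suc ?N choose j = (if j = 0 then 0 else ?N choose (j - 1)) + (?N choose j)"
    by (rule choose_Suc_pred)
  ultimately show ?case by (simp del: binomial_Suc_Suc)
next
  case (3 j h)
  let ?N = "Suc (Suc (2 * j + h))"
  have "2 * Suc j + h = ?N" "2 * j + Suc (Suc h) = ?N" by simp_all
  then have "ballot (Suc j) h + (?N choose j) = ?N choose Suc j"
    and "ballot j (Suc (Suc h)) + (if j = 0 then 0 else ?N choose (j - 1)) = ?N choose j"
    using 3 by (simp_all only:) simp
  moreover have "Suc ?N choose Suc j = (?N choose j) + (?N choose Suc j)" by (rule binomial_Suc_Suc)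
  moreover have "Suc ?N choose j = (if j = 0 then 0 else ?N choose (j - 1)) + (?N choose j)"
    by (rule choose_Suc_pred)
  moreover have "2 * Suc j + Suc h = Suc ?N" by simp
  ultimately show ?case by (simp only: ballot.simps) simp
qed

lemma catalan_eq_ballot: "catalan j = ballot j 0"
proof (cases j)
  case 0
  then show ?thesis by (simp add: catalan_def)
next
  case (Suc i)
  have "Suc (i + j) = 2 * j" using Suc by simp
  then have "j * (2 * j choose j) = Suc j * (2 * j choose i)"
    using Suc_times_binomial_add[of i j] by (simp only: Suc[symmetric])
  moreover have "ballot j 0 + (2 * j choose i) = 2 * j choose j"
    using ballot_add_choose[of j 0] Suc by simp
  then have "Suc j * ballot j 0 + Suc j * (2 * j choose i) = Suc j * (2 * j choose j)"
    by (metis distrib_left)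
  ultimately have "Suc j * ballot j 0 = 2 * j choose j" by simp
  then show ?thesis by (metis catalan_def Suc_eq_plus1 nonzero_mult_div_cancel_left Suc_neq_Zero)
qed

definition ballot_sum :: "'a::comm_ring_1 \<Rightarrow> nat \<Rightarrow> nat \<Rightarrow> 'a" where
  "ballot_sum x m h = (\<Sum>j\<le>m. x ^ j * of_nat ((m choose (2 * j + h)) * ballot j h))"

lemma ballot_sum_extend:
  "m \<le> M \<Longrightarrow> ballot_sum x m h = (\<Sum>j\<le>M. x ^ j * of_nat ((m choose (2 * j + h)) * ballot j h))"
  unfolding ballot_sum_def by (rule sum.mono_neutral_left) (auto simp: binomial_eq_0)

lemma choose_ballot_Suc:
  "(Suc m choose (2 * j + h)) * ballot j h = (m choose (2 * j + h)) * ballot j h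
    + (case h of 0 \<Rightarrow> 0 | Suc h' \<Rightarrow> (m choose (2 * j + h')) * ballot j h')
    + (case j of 0 \<Rightarrow> 0 | Suc j' \<Rightarrow> (m choose (2 * j' + Suc h)) * ballot j' (Suc h))"
proof (cases j)
  case 0
  then show ?thesis
  proof (cases h)
    case 0 then show ?thesis using \<open>j = 0\<close> by simp
  next
    case (Suc h')
    then show ?thesis using \<open>j = 0\<close> by (simp add: algebra_simps)
  qed
next
  case (Suc j')
  then show ?thesis
  proof (cases h)
    case 0
    have "2 * j + h = Suc (2 * j' + Suc h)" using Suc 0 by simp
    then show ?thesis using Suc 0 by (simp add: algebra_simps)
  next
    case (Suc h')
    have e1: "2 * j + h = Suc (2 * j + h')" using Suc by simp
    have e2: "2 * j' + Suc h = 2 * j + h'" using \<open>j = Suc j'\<close> Suc by simp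
    have "ballot j h = ballot j h' + ballot j' (Suc h)" using \<open>j = Suc j'\<close> Suc by simp
    then show ?thesis using \<open>j = Suc j'\<close> Suc unfolding e1 e2 by (simp add: algebra_simps)
  qed
qed

lemma ballot_sum_Suc:
  fixes x :: "'a::comm_ring_1"
  shows "ballot_sum x (Suc m) h =
    ballot_sum x m h + (case h of 0 \<Rightarrow> 0 | Suc h' \<Rightarrow> ballot_sum x m h') + x * ballot_sum x m (Suc h)"
proof -
  define T where "T m h j = x ^ j * of_nat ((m choose (2 * j + h)) * ballot j h)" for m h j
  define B where "B j = (case h of 0 \<Rightarrow> 0 | Suc h' \<Rightarrow> T m h' j)" for j
  define C where "C j = (case j of 0 \<Rightarrow> 0 | Suc j' \<Rightarrow> x * T m (Suc h) j')" for j
  have "ballot_sum x (Suc m) h = (\<Sum>j\<le>Suc m. T m h j + B j + C j)"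
    unfolding ballot_sum_def
  proof (intro sum.cong refl)
    fix j
    show "x ^ j * of_nat ((Suc m choose (2 * j + h)) * ballot j h) = T m h j + B j + C j"
      unfolding T_def B_def C_def choose_ballot_Suc[of m j h]
      by (cases h; cases j) (simp_all add: algebra_simps)
  qed
  also have "\<dots> = (\<Sum>j\<le>Suc m. T m h j) + (\<Sum>j\<le>Suc m. B j) + (\<Sum>j\<le>Suc m. C j)"
    by (simp add: sum.distrib)
  also have "(\<Sum>j\<le>Suc m. T m h j) = ballot_sum x m h"
    unfolding T_def by (rule ballot_sum_extend[symmetric]) simp
  also have "(\<Sum>j\<le>Suc m. B j) = (case h of 0 \<Rightarrow> 0 | Suc h' \<Rightarrow> ballot_sum x m h')"
    by (cases h) (simp_all add: B_def T_def ballot_sum_extend[of m "Suc m"])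
  also have "(\<Sum>j\<le>Suc m. C j) = x * ballot_sum x m (Suc h)"
    unfolding sum.atMost_Suc_shift by (simp add: C_def T_def ballot_sum_def sum_distrib_left)
  finally show ?thesis .
qed

text \<open>Poor noncrossing partitions of \<open>[m]\<close> with \<open>h\<close> of their visible singletons marked.\<close>

definition Mo_marked :: "'a::comm_ring_1 \<Rightarrow> nat \<Rightarrow> nat \<Rightarrow> 'a" where
  "Mo_marked x m h = Mo_by_visible_singletons x m (\<lambda>s. of_nat (s choose h))"

lemma Mo_marked_Suc:
  fixes x :: "'a::comm_ring_1"
  shows "Mo_marked x (Suc m) h =
    Mo_marked x m h + (case h of 0 \<Rightarrow> 0 | Suc h' \<Rightarrow> Mo_marked x m h') + x * Mo_marked x m (Suc h)"
proof -
  have "of_nat (Suc s choose h) + x * (\<Sum>r<s. of_nat (r choose h)) =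
      of_nat (s choose h) + (case h of 0 \<Rightarrow> 0 | Suc h' \<Rightarrow> of_nat (s choose h')) +
      x * (of_nat (s choose Suc h) :: 'a)" for s
  proof -
    have "(\<Sum>r<s. r choose h) = s choose Suc h"
      by (cases s) (simp_all add: lessThan_Suc_atMost sum_choose_upper)
    then show ?thesis by (cases h) (simp_all flip: of_nat_sum)
  qed
  then show ?thesis
    unfolding Mo_marked_def Mo_by_visible_singletons_Suc
    by (cases h) (simp_all add: Mo_by_visible_singletons_def algebra_simps sum.distrib sum_distrib_left)
qed

lemma Mo_marked_eq_ballot_sum: "Mo_marked x m h = ballot_sum x m h"
proof (induction m arbitrary: h)
  case 0
  show ?case by (simp add: Mo_marked_def Mo_by_visible_singletons_0 ballot_sum_def)
next
  case (Suc m)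
  then show ?case by (simp add: Mo_marked_Suc ballot_sum_Suc split: nat.split)
qed

lemma Mo_eq_sum_catalan:
  fixes x :: "'a::comm_ring_1"
  shows "Mo m x = (\<Sum>j\<le>m. x ^ j * of_nat ((m choose (2 * j)) * catalan j))"
proof -
  have "Mo m x = Mo_marked x m 0"
    by (simp add: Mo_def Mo_marked_def Mo_by_visible_singletons_def)
  then show ?thesis
    by (simp add: Mo_marked_eq_ballot_sum ballot_sum_def catalan_eq_ballot)
qed

lemma Mo_binomial_eq_catalan_sum:
  fixes x y :: "'a::comm_ring_1"
  shows "(\<Sum>k=0..n. of_nat (n choose k) * Mo k x * y ^ (n - k)) =
    (\<Sum>k=0..n div 2. of_nat (catalan k) * of_nat (n choose (2 * k)) * x ^ k * (y + 1) ^ (n - 2 * k))"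
proof -
  define A where "A i = (if even i then x ^ (i div 2) * of_nat (catalan (i div 2)) else 0)" for i
  have Mo_A: "Mo k x = (\<Sum>i\<le>k. of_nat (k choose i) * A i * 1 ^ (k - i))" for k
  proof -
    have "(\<Sum>i\<le>k. of_nat (k choose i) * A i * 1 ^ (k - i)) =
        (\<Sum>i\<le>k. if even i then of_nat (k choose (2 * (i div 2))) * (x ^ (i div 2) * of_nat (catalan (i div 2))) else 0)"
      by (intro sum.cong refl) (auto simp: A_def)
    also have "\<dots> = (\<Sum>j\<le>k div 2. of_nat (k choose (2 * j)) * (x ^ j * of_nat (catalan j)))"
      by (rule sum_atMost_even)
    also have "\<dots> = (\<Sum>j\<le>k. of_nat (k choose (2 * j)) * (x ^ j * of_nat (catalan j)))"
    proof (rule sum.mono_neutral_left)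
      show "\<forall>j\<in>{..k} - {..k div 2}. of_nat (k choose (2 * j)) * (x ^ j * of_nat (catalan j)) = 0"
      proof
        fix j assume "j \<in> {..k} - {..k div 2}"
        then have "k < 2 * j" by auto
        then show "of_nat (k choose (2 * j)) * (x ^ j * of_nat (catalan j)) = 0"
          by (simp add: binomial_eq_0)
      qed
    qed auto
    finally show ?thesis by (simp add: Mo_eq_sum_catalan mult_ac)
  qed
  have "(\<Sum>k=0..n. of_nat (n choose k) * Mo k x * y ^ (n - k)) =
      (\<Sum>k\<le>n. of_nat (n choose k) * y ^ (n - k) * (\<Sum>i\<le>k. of_nat (k choose i) * A i * 1 ^ (k - i)))"
    by (simp add: atLeast0AtMost Mo_A mult_ac)
  also have "\<dots> = (\<Sum>i\<le>n. of_nat (n choose i) * A i * (y + 1) ^ (n - i))"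
    by (rule binomial_transform_compose)
  also have "\<dots> = (\<Sum>i\<le>n. if even i then of_nat (n choose (2 * (i div 2))) *
      (x ^ (i div 2) * of_nat (catalan (i div 2))) * (y + 1) ^ (n - 2 * (i div 2)) else 0)"
    by (intro sum.cong refl) (auto simp: A_def)
  also have "\<dots> = (\<Sum>j\<le>n div 2. of_nat (n choose (2 * j)) * (x ^ j * of_nat (catalan j)) * (y + 1) ^ (n - 2 * j))"
    by (rule sum_atMost_even)
  finally show ?thesis by (simp add: atLeast0AtMost mult_ac)
qed

theorem theorem3p4:
  fixes n :: nat and x y :: "'a::comm_ring_1"
  shows "Bxy (n + 1) x y = (\<Sum>k=0..n. of_nat (n choose k) * Bx k x * y ^ (n - k))
       \<and> (\<Sum>k=0..n. of_nat (n choose k) * Bx k x * y ^ (n - k))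
           = (\<Sum>k=0..n. of_nat (n choose k) * Fe k x * (y + 1) ^ (n - k))
       \<and> Cxy (n + 1) x y = (\<Sum>k=0..n. of_nat (n choose k) * Mo k x * y ^ (n - k))
       \<and> (\<Sum>k=0..n. of_nat (n choose k) * Mo k x * y ^ (n - k))
           = (\<Sum>k=0..n div 2. of_nat (catalan k) * of_nat (n choose (2 * k)) * x ^ k * (y + 1) ^ (n - 2 * k))"
  using Bxy_Suc_binomial Bx_binomial_eq_Fe_binomial Cxy_Suc_binomial Mo_binomial_eq_catalan_sum
  by blast

end
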